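(* Let $\Omega$ be a finite set and $f:2^{\Omega}\to\mathbb{R}$ increasing with $f(\emptyset)=0$, and let $\tilde\gamma\in\Gamma(f)$. Then for every $\mathcal{S}\subseteq\Omega$, $f(\mathcal{S})\ge-|\mathcal{S}|D[f]+\sum_{s\in\mathcal{S}}\tilde\gamma_s$.
   Context: For a permutation $\pi$ of $\Omega$, $\mathcal{S}^\pi_0=\emptyset$, $\mathcal{S}^\pi_k=\{\pi_1,\dots,\pi_k\}$; $\Gamma(f)=\{\gamma\in\mathbb{R}^{|\Omega|}:\exists$ permutation $\pi$ with $\gamma_{\pi_i}=f(\mathcal{S}^\pi_i)-f(\mathcal{S}^\pi_{i-1})$ for all $i\}$. $D[f]=\max\{f(\mathcal{A}\cup\mathcal{B}\cup\{s\})-f(\mathcal{A}\cup\mathcal{B})-f(\mathcal{A}\cup\{s\})+f(\mathcal{A}):\mathcal{A},\mathcal{B}\subseteq\Omega,s\in\Omega,|\mathcal{A}|\le|\Omega|-1\}$. *)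

theory Defs
  imports Complex_Main
begin

text \<open>A permutation pi of Omega is a duplicate-free list whose elements are exactly Omega;
  S^pi_k = set (take k pi). Gamma(f) is the set of marginal-gain vectors along such orderings
  (gamma (pi!i) uses 0-based indices: S_{i+1} minus S_i).\<close>
definition Gamma :: "'a set \<Rightarrow> ('a set \<Rightarrow> real) \<Rightarrow> ('a \<Rightarrow> real) set" where
  "Gamma \<Omega> f = {\<gamma>. \<exists>\<pi>. distinct \<pi> \<and> set \<pi> = \<Omega> \<and>
      (\<forall>i<length \<pi>. \<gamma> (\<pi> ! i) = f (set (take (Suc i) \<pi>)) - f (set (take i \<pi>)))}"

definition Dcurv :: "'a set \<Rightarrow> ('a set \<Rightarrow> real) \<Rightarrow> real" where
  "Dcurv \<Omega> f = Max {f (A \<union> B \<union> {s}) - f (A \<union> B) - f (A \<union> {s}) + f A | A B s.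
      A \<subseteq> \<Omega> \<and> B \<subseteq> \<Omega> \<and> s \<in> \<Omega> \<and> card A \<le> card \<Omega> - 1}"

end

theory Submission
  imports Defs
begin

text \<open>Walk along the ordering \<pi> and add the elements of S one at a time. When \<pi>!k \<in> S
  is added to the part T of S already collected, T lies inside the prefix P of \<pi> before
  \<pi>!k, and the curvature term with A = T, B = P, s = \<pi>!k says that the gain of \<pi>!k at T
  is at least its gain \<gamma> (\<pi>!k) at P minus D[f]. Summing over the |S| steps gives the
  bound.\<close>

lemma finite_Dcurv_set:
  assumes "finite \<Omega>"
  shows "finite {f (A \<union> B \<union> {s}) - f (A \<union> B) - f (A \<union> {s}) + f A | A B s.
      A \<subseteq> \<Omega> \<and> B \<subseteq> \<Omega> \<and> s \<in> \<Omega> \<and> card A \<le> card \<Omega> - 1}"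
proof (rule finite_subset)
  show "finite ((\<lambda>(A, B, s). f (A \<union> B \<union> {s}) - f (A \<union> B) - f (A \<union> {s}) + f A)
      ` (Pow \<Omega> \<times> Pow \<Omega> \<times> \<Omega>))"
    using assms by simp
next
  show "{f (A \<union> B \<union> {s}) - f (A \<union> B) - f (A \<union> {s}) + f A | A B s.
      A \<subseteq> \<Omega> \<and> B \<subseteq> \<Omega> \<and> s \<in> \<Omega> \<and> card A \<le> card \<Omega> - 1}
    \<subseteq> (\<lambda>(A, B, s). f (A \<union> B \<union> {s}) - f (A \<union> B) - f (A \<union> {s}) + f A)
      ` (Pow \<Omega> \<times> Pow \<Omega> \<times> \<Omega>)"
    by (auto intro: image_eqI[where x="(_, _, _)"])
qed

lemma curvature_term_le_Dcurv:
  assumes "finite \<Omega>" "A \<subseteq> \<Omega>" "B \<subseteq> \<Omega>" "s \<in> \<Omega>" "card A \<le> card \<Omega> - 1"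
  shows "f (A \<union> B \<union> {s}) - f (A \<union> B) - f (A \<union> {s}) + f A \<le> Dcurv \<Omega> f"
  unfolding Dcurv_def using assms by (intro Max_ge finite_Dcurv_set) blast+

lemma marginal_gain_le_Dcurv:
  assumes "finite \<Omega>" "T \<subseteq> P" "P \<subseteq> \<Omega>" "s \<in> \<Omega>" "card T \<le> card \<Omega> - 1"
  shows "f (insert s P) - f P \<le> f (insert s T) - f T + Dcurv \<Omega> f"
proof -
  have "T \<union> P = P" using assms(2) by blast
  then show ?thesis
    using curvature_term_le_Dcurv[OF assms(1) _ assms(3,4,5), of f] assms(2,3) by force
qed

lemma prefix_gain_sum_bound:
  assumes "finite \<Omega>" "distinct \<pi>" "set \<pi> \<subseteq> \<Omega>" "f {} = 0"
    and gains: "\<And>i. i < length \<pi> \<Longrightarrow> \<gamma> (\<pi> ! i) = f (set (take (Suc i) \<pi>)) - f (set (take i \<pi>))"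
    and "k \<le> length \<pi>"
  shows "f (S \<inter> set (take k \<pi>)) \<ge>
    - real (card (S \<inter> set (take k \<pi>))) * Dcurv \<Omega> f + (\<Sum>s\<in>S \<inter> set (take k \<pi>). \<gamma> s)"
  using \<open>k \<le> length \<pi>\<close>
proof (induction k)
  case 0
  then show ?case using \<open>f {} = 0\<close> by simp
next
  case (Suc k)
  define P where "P = set (take k \<pi>)"
  define T where "T = S \<inter> P"
  define s where "s = \<pi> ! k"
  have k_less: "k < length \<pi>" using Suc.prems by simp
  have prefix_Suc: "set (take (Suc k) \<pi>) = insert s P"
    using k_less by (simp add: take_Suc_conv_app_nth P_def s_def)
  have IH: "f T \<ge> - real (card T) * Dcurv \<Omega> f + (\<Sum>t\<in>T. \<gamma> t)"
    using Suc by (simp add: T_def P_def)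
  show ?case
  proof (cases "s \<in> S")
    case False
    then have "S \<inter> set (take (Suc k) \<pi>) = T" by (auto simp: prefix_Suc T_def)
    then show ?thesis using IH by simp
  next
    case True
    have s_notin: "s \<notin> P"
      using \<open>distinct \<pi>\<close> k_less by (simp add: P_def s_def in_set_conv_nth nth_eq_iff_index_eq)
    have "card T \<le> card P" by (simp add: T_def P_def card_mono)
    also have "\<dots> \<le> k" unfolding P_def by (rule card_length[THEN order_trans]) simp
    also have "k < card \<Omega>"
      using k_less \<open>distinct \<pi>\<close> assms(1,3) by (metis card_mono distinct_card order_less_le_trans)
    finally have "card T \<le> card \<Omega> - 1" by simp
    moreover have "P \<subseteq> \<Omega>" using assms(3) set_take_subset by (metis P_def order_trans)
    moreover have "s \<in> \<Omega>" using assms(3) k_less nth_mem s_def by blast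
    ultimately have "\<gamma> s \<le> f (insert s T) - f T + Dcurv \<Omega> f"
      using marginal_gain_le_Dcurv[OF assms(1), of T P s f] gains[OF k_less] prefix_Suc
      by (simp add: T_def P_def s_def)
    moreover have "S \<inter> set (take (Suc k) \<pi>) = insert s T" using True by (auto simp: prefix_Suc T_def)
    moreover have "s \<notin> T" "finite T" using s_notin by (simp_all add: T_def P_def)
    ultimately show ?thesis using IH by (simp add: algebra_simps)
  qed
qed

theorem mainTheorem18:
  fixes \<Omega> :: "'a set" and f :: "'a set \<Rightarrow> real" and \<gamma> :: "'a \<Rightarrow> real"
  assumes "finite \<Omega>"
    and "\<And>A B. A \<subseteq> B \<Longrightarrow> B \<subseteq> \<Omega> \<Longrightarrow> f A \<le> f B"
    and "f {} = 0"
    and "\<gamma> \<in> Gamma \<Omega> f"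
    and "S \<subseteq> \<Omega>"
  shows "f S \<ge> - real (card S) * Dcurv \<Omega> f + (\<Sum>s\<in>S. \<gamma> s)"
proof -
  obtain \<pi> where "distinct \<pi>" "set \<pi> = \<Omega>"
    and "\<And>i. i < length \<pi> \<Longrightarrow> \<gamma> (\<pi> ! i) = f (set (take (Suc i) \<pi>)) - f (set (take i \<pi>))"
    using assms(4) unfolding Gamma_def by blast
  then have "f (S \<inter> set (take (length \<pi>) \<pi>)) \<ge> - real (card (S \<inter> set (take (length \<pi>) \<pi>)))
      * Dcurv \<Omega> f + (\<Sum>s\<in>S \<inter> set (take (length \<pi>) \<pi>). \<gamma> s)"
    using assms(1,3) by (intro prefix_gain_sum_bound) auto
  moreover have "S \<inter> set (take (length \<pi>) \<pi>) = S" using assms(5) \<open>set \<pi> = \<Omega>\<close> by auto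
  ultimately show ?thesis by simp
qed

end
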